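(* Let $p$ be an odd prime and $q\in\mathbb C_p$ with $|1-q|_p<p^{-1/(p-1)}$. For $n\in\mathbb Z_+$ and $x\in\mathbb Z_p$, $$E_{n,q}(x)=2\sum_{l=0}^n\sum_{k=l}^n\sum_{\substack{l_0+\cdots+l_k=n-k\\ l_0,\dots,l_k\in\mathbb Z_+}}q^{\sum_{i=0}^k il_i}\frac{1}{(1-q)^{n+l-k}}s_{1,q}(k,l)(-1)^k\frac{q^{lx}}{1+q^l}.$$
   Context: $[x]_q=\frac{1-q^x}{1-q}$. The fermionic $p$-adic integral of a uniformly differentiable $f:\mathbb Z_p\to\mathbb C_p$ is $\int_{\mathbb Z_p}f(y)\,d\mu_{-1}(y)=\lim_{N\to\infty}\sum_{y=0}^{p^N-1}f(y)(-1)^y$. The $q$-Euler polynomials are $E_{n,q}(x)=\int_{\mathbb Z_p}[x+y]_q^n\,d\mu_{-1}(y)$. The $q$-Stirling numbers of the first kind $s_{1,q}(k,l)$ are defined by $[x]_q[x-1]_q\cdots[x-k+1]_q=q^{-\binom k2}\sum_{l=0}^k s_{1,q}(k,l)[x]_q^l$, as an identity of polynomials in $[x]_q$ (using $[x-i]_q=q^{-i}([x]_q-[i]_q)$). *)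

theory Defs
  imports "HOL-Computational_Algebra.Polynomial" "HOL-Computational_Algebra.Primes"
begin

text \<open>The field C_p is modelled abstractly: a field of characteristic 0 (type 'a)
  carrying an absolute value absv such that (K, absv) is a complete, algebraically
  closed, non-archimedean valued field with absv p = 1/p, in which the elements
  algebraic over Q are dense.  These properties characterise C_p up to isometric
  isomorphism.\<close>

definition abs_tends_zero :: "(nat \<Rightarrow> real) \<Rightarrow> bool" where
  "abs_tends_zero u \<longleftrightarrow> (\<forall>e>0. \<exists>M. \<forall>m\<ge>M. u m < e)"

definition is_Cp :: "nat \<Rightarrow> ('a::field_char_0 \<Rightarrow> real) \<Rightarrow> bool" where
  "is_Cp p absv \<longleftrightarrow>
     (\<forall>x. absv x \<ge> 0) \<and>
     (\<forall>x. absv x = 0 \<longleftrightarrow> x = 0) \<and>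
     (\<forall>x y. absv (x * y) = absv x * absv y) \<and>
     (\<forall>x y. absv (x + y) \<le> max (absv x) (absv y)) \<and>
     absv (of_nat p) = 1 / real p \<and>
     (\<forall>X::nat \<Rightarrow> 'a. (\<forall>e>0. \<exists>M. \<forall>m\<ge>M. \<forall>n\<ge>M. absv (X m - X n) < e)
        \<longrightarrow> (\<exists>L. abs_tends_zero (\<lambda>n. absv (X n - L)))) \<and>
     (\<forall>P::'a poly. degree P \<ge> 1 \<longrightarrow> (\<exists>z. poly P z = 0)) \<and>
     (\<forall>z. \<forall>e>0. \<exists>w. absv (z - w) < e \<and>
          (\<exists>P::rat poly. P \<noteq> 0 \<and> poly (map_poly of_rat P) w = 0))"

definition Zp :: "('a::field_char_0 \<Rightarrow> real) \<Rightarrow> 'a set" where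
  "Zp absv = {z. \<forall>e>0. \<exists>n::int. absv (z - of_int n) < e}"

definition qpow_has :: "('a::field_char_0 \<Rightarrow> real) \<Rightarrow> 'a \<Rightarrow> 'a \<Rightarrow> 'a \<Rightarrow> bool" where
  "qpow_has absv q x v \<longleftrightarrow>
     (\<forall>e>0. \<exists>d>0. \<forall>n::int. absv (x - of_int n) < d \<longrightarrow> absv (q powi n - v) < e)"

definition qpow :: "('a::field_char_0 \<Rightarrow> real) \<Rightarrow> 'a \<Rightarrow> 'a \<Rightarrow> 'a" where
  "qpow absv q x = (THE v. qpow_has absv q x v)"

definition qnum :: "('a::field_char_0 \<Rightarrow> real) \<Rightarrow> 'a \<Rightarrow> 'a \<Rightarrow> 'a" where
  "qnum absv q x = (1 - qpow absv q x) / (1 - q)"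

definition fermionic_has ::
  "nat \<Rightarrow> ('a::field_char_0 \<Rightarrow> real) \<Rightarrow> ('a \<Rightarrow> 'a) \<Rightarrow> 'a \<Rightarrow> bool" where
  "fermionic_has p absv f v \<longleftrightarrow>
     abs_tends_zero (\<lambda>N. absv ((\<Sum>y<p^N. f (of_nat y) * (-1)^y) - v))"

text \<open>q-Stirling numbers of the first kind: s_{1,q}(k,l) is the coefficient of T^l in
  q^(k choose 2) * prod_{i<k} q^(-i) (T - [i]_q), i.e. the identity
  [x]_q[x-1]_q...[x-k+1]_q = q^(-binom k 2) sum_l s_{1,q}(k,l) [x]_q^l
  with [x-i]_q = q^(-i)([x]_q - [i]_q), read as a polynomial identity in T = [x]_q.\<close>
definition stirling1q :: "'a::field_char_0 \<Rightarrow> nat \<Rightarrow> nat \<Rightarrow> 'a" where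
  "stirling1q q k l =
     coeff (smult (q ^ (k choose 2))
        (\<Prod>i<k. smult (inverse q ^ i) [: - ((1 - q ^ i) / (1 - q)), 1 :])) l"

definition comps :: "nat \<Rightarrow> nat \<Rightarrow> (nat \<Rightarrow> nat) set" where
  "comps k m = {ls. (\<forall>i>k. ls i = 0) \<and> (\<Sum>i\<le>k. ls i) = m}"

end

theory Submission
  imports Defs
begin

text \<open>Put Q = q^x. Then [x + y]_q = (1 - Q q^y)/(1 - q), so by the binomial theorem
  [x + y]_q^n is a linear combination of the geometric sequences y \<mapsto> (q^l)^y with
  coefficients binom(n,l) (-1)^l Q^l / (1 - q)^n.  Since |q^l - 1| < p^(-1/(p-1)), raising to
  the p-th power divides the distance to 1 by p, so |q^(l p^N) - 1| \<le> |q - 1| p^(-N); as p^N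
  is odd, the alternating sums of (q^l)^y over y < p^N therefore tend to 2/(1 + q^l).

  It remains to recognise the coefficients in the stated triple sum.  The inner sum over
  compositions is the complete homogeneous polynomial h_(n-k)(1, q, ..., q^k), and Newton's
  expansion z^n = \<Sum>_k h_(n-k)(1, ..., q^k) \<Prod>_(i<k) (z - q^i), evaluated at z = 1 + (q - 1) Y,
  becomes (1 + (q - 1) Y)^n = \<Sum>_k h_(n-k) (q - 1)^k \<Prod>_(i<k) (Y - [i]_q).  Comparing the
  coefficients of Y^l expresses binom(n,l) (q - 1)^l through the q-Stirling numbers s_(1,q)(k,l).\<close>

section \<open>Newton's expansion of powers and the q-Stirling numbers\<close>

text \<open>complete_hom x k m is the complete homogeneous symmetric polynomial h_m(x_0, ..., x_k):
  a composition of m into k + 1 parts is the exponent vector of one of its monomials.\<close>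

definition complete_hom :: "(nat \<Rightarrow> 'a::comm_semiring_1) \<Rightarrow> nat \<Rightarrow> nat \<Rightarrow> 'a" where
  "complete_hom x k m = (\<Sum>ls\<in>comps k m. \<Prod>i\<le>k. x i ^ ls i)"

lemma finite_comps: "finite (comps k m)"
proof (rule finite_subset)
  have "ls i \<le> m" if "ls \<in> comps k m" "i \<le> k" for ls i
    using that member_le_sum[of i "{..k}" ls] by (simp add: comps_def)
  then show "comps k m \<subseteq> {ls. \<forall>i. (i \<in> {..k} \<longrightarrow> ls i \<in> {..m}) \<and> (i \<notin> {..k} \<longrightarrow> ls i = 0)}"
    by (auto simp: comps_def)
qed (rule finite_set_of_finite_funs; simp)

lemma complete_hom_0_left: "complete_hom x 0 m = x 0 ^ m"
proof -
  have "comps 0 m = {\<lambda>i. if i = 0 then m else 0}"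
    by (auto simp: comps_def fun_eq_iff)
  then show ?thesis by (simp add: complete_hom_def)
qed

lemma comps_0_right: "comps k 0 = {\<lambda>_. 0}"
  by (auto simp: comps_def fun_eq_iff) (metis atMost_iff not_le)

lemma complete_hom_0_right: "complete_hom x k 0 = 1"
  by (simp add: complete_hom_def comps_0_right)

lemma complete_hom_Suc:
  "complete_hom x (Suc k) (Suc m) = complete_hom x k (Suc m) + x (Suc k) * complete_hom x (Suc k) m"
proof -
  let ?K = "Suc k"
  let ?w = "\<lambda>ls. \<Prod>i\<le>?K. x i ^ ls i"
  let ?pos = "{ls\<in>comps ?K (Suc m). ls ?K > 0}"
  have comps_split: "comps ?K (Suc m) = comps k (Suc m) \<union> ?pos"
    by (auto simp: comps_def) (metis Suc_lessI not_gr0)+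
  have disjoint: "comps k (Suc m) \<inter> ?pos = {}"
    by (auto simp: comps_def)
  have shift: "?w (ls(?K := Suc (ls ?K))) = x ?K * ?w ls" for ls
  proof -
    have "(\<Prod>i\<le>k. x i ^ (ls(?K := Suc (ls ?K))) i) = (\<Prod>i\<le>k. x i ^ ls i)"
      by (intro prod.cong) auto
    then show ?thesis by (simp add: algebra_simps)
  qed
  have "complete_hom x ?K (Suc m) = (\<Sum>ls\<in>comps k (Suc m). ?w ls) + (\<Sum>ls\<in>?pos. ?w ls)"
    unfolding complete_hom_def
    by (subst comps_split) (rule sum.union_disjoint; simp add: finite_comps disjoint)
  also have "(\<Sum>ls\<in>comps k (Suc m). ?w ls) = complete_hom x k (Suc m)"
    unfolding complete_hom_def by (intro sum.cong) (auto simp: comps_def)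
  also have "(\<Sum>ls\<in>?pos. ?w ls) = (\<Sum>ls\<in>comps ?K m. ?w (ls(?K := Suc (ls ?K))))"
  proof (rule sum.reindex_bij_witness[where i = "\<lambda>ls. ls(?K := Suc (ls ?K))"
        and j = "\<lambda>ls. ls(?K := ls ?K - 1)"])
    fix ls assume "ls \<in> ?pos"
    then show "ls(?K := ls ?K - 1) \<in> comps ?K m"
      by (auto simp: comps_def)
  next
    fix ls assume "ls \<in> comps ?K m"
    then show "ls(?K := Suc (ls ?K)) \<in> ?pos"
      by (auto simp: comps_def)
  qed auto
  also have "\<dots> = x ?K * complete_hom x ?K m"
    by (simp only: shift complete_hom_def sum_distrib_left)
  finally show ?thesis .
qed

text \<open>Newton's interpolation formula for z^n at the nodes x_0, x_1, ...: the divided differences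
  of z^n are complete homogeneous polynomials in the nodes.\<close>

lemma power_eq_newton_sum:
  fixes z :: "'a::comm_ring_1"
  shows "z ^ n = (\<Sum>k\<le>n. complete_hom x k (n - k) * (\<Prod>i<k. z - x i))"
proof (induction n)
  case 0
  show ?case by (simp add: complete_hom_0_right)
next
  case (Suc n)
  define P where "P k = (\<Prod>i<k. z - x i)" for k
  define h where "h k = complete_hom x k (n - k)" for k
  have zP: "z * P k = P (Suc k) + x k * P k" for k
    by (simp add: P_def algebra_simps)
  have h_Suc: "complete_hom x (Suc k) (n - k) = h k + x (Suc k) * h (Suc k)" if "k < n" for k
  proof -
    from that have "n - k = Suc (n - Suc k)" by simp
    then show ?thesis by (simp add: h_def complete_hom_Suc)
  qed
  have "z ^ Suc n = (\<Sum>k\<le>n. h k * (z * P k))"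
    using Suc.IH by (simp add: P_def h_def sum_distrib_left ac_simps)
  also have "\<dots> = (\<Sum>k\<le>n. h k * P (Suc k)) + (\<Sum>k\<le>n. x k * h k * P k)"
    by (simp add: zP sum.distrib algebra_simps)
  also have "(\<Sum>k\<le>n. h k * P (Suc k)) = (\<Sum>k<n. h k * P (Suc k)) + P (Suc n)"
    by (simp add: lessThan_Suc_atMost[symmetric] h_def complete_hom_0_right)
  also have "(\<Sum>k\<le>n. x k * h k * P k) = x 0 ^ Suc n + (\<Sum>k<n. x (Suc k) * h (Suc k) * P (Suc k))"
    by (simp only: lessThan_Suc_atMost[symmetric] sum.lessThan_Suc_shift)
       (simp add: h_def P_def complete_hom_0_left)
  also have "(\<Sum>k<n. h k * P (Suc k)) + P (Suc n) + (x 0 ^ Suc n + (\<Sum>k<n. x (Suc k) * h (Suc k) * P (Suc k)))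
      = x 0 ^ Suc n + (\<Sum>k<n. complete_hom x (Suc k) (n - k) * P (Suc k)) + P (Suc n)"
    by (simp add: h_Suc sum.distrib algebra_simps)
  also have "\<dots> = x 0 ^ Suc n + (\<Sum>k\<le>n. complete_hom x (Suc k) (n - k) * P (Suc k))"
    by (simp add: lessThan_Suc_atMost[symmetric] complete_hom_0_right)
  also have "\<dots> = (\<Sum>k\<le>Suc n. complete_hom x k (Suc n - k) * P k)"
    by (simp only: sum.atMost_Suc_shift) (simp add: complete_hom_0_left P_def)
  finally show ?case by (simp add: P_def)
qed

lemma complete_hom_geometric:
  "complete_hom (\<lambda>i. q ^ i) k m = (\<Sum>ls\<in>comps k m. q ^ (\<Sum>i\<le>k. i * ls i))"
  unfolding complete_hom_def by (simp add: power_sum power_mult)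

definition qstirling_poly :: "'a::field_char_0 \<Rightarrow> nat \<Rightarrow> 'a poly" where
  "qstirling_poly q k = smult (q ^ (k choose 2))
     (\<Prod>i<k. smult (inverse q ^ i) [: - ((1 - q ^ i) / (1 - q)), 1 :])"

lemma coeff_qstirling_poly: "coeff (qstirling_poly q k) l = stirling1q q k l"
  by (simp add: stirling1q_def qstirling_poly_def)

lemma degree_qstirling_poly: "degree (qstirling_poly q k) \<le> k"
proof -
  define f where "f i = smult (inverse q ^ i) [: - ((1 - q ^ i) / (1 - q)), 1 :]" for i
  have "degree (\<Prod>i<k. f i) \<le> (\<Sum>i<k. degree (f i))"
    using degree_prod_sum_le[of "{..<k}" f] by (simp add: o_def)
  also have "\<dots> \<le> (\<Sum>i<k. 1)"
    by (intro sum_mono) (simp add: f_def degree_smult_le)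
  finally show ?thesis
    unfolding qstirling_poly_def f_def[symmetric] using degree_smult_le order_trans by fastforce
qed

lemma poly_qstirling_poly:
  assumes "q \<noteq> 0"
  shows "poly (qstirling_poly q k) y = (\<Prod>i<k. y - (1 - q ^ i) / (1 - q))"
proof -
  have "(\<Sum>i<k. i) = k choose 2"
    by (induction k) (simp_all add: numeral_2_eq_2)
  then have "(\<Prod>i<k. inverse q ^ i) = inverse q ^ (k choose 2)"
    by (simp flip: power_sum)
  then have "q ^ (k choose 2) * (\<Prod>i<k. inverse q ^ i) = 1"
    using assms by (simp add: power_inverse)
  moreover have "poly (qstirling_poly q k) y
      = q ^ (k choose 2) * (\<Prod>i<k. inverse q ^ i * (y - (1 - q ^ i) / (1 - q)))"
    unfolding qstirling_poly_def poly_smult poly_prod by simp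
  ultimately show ?thesis
    by (simp add: prod.distrib mult.assoc[symmetric])
qed

lemma sum_qstirling_poly:
  fixes q :: "'a::field_char_0"
  assumes "q \<noteq> 0" "q \<noteq> 1"
  shows "(\<Sum>k\<le>n. smult (complete_hom (\<lambda>i. q ^ i) k (n - k) * (q - 1) ^ k) (qstirling_poly q k))
       = [:1, q - 1:] ^ n"
proof -
  have "poly (\<Sum>k\<le>n. smult (complete_hom (\<lambda>i. q ^ i) k (n - k) * (q - 1) ^ k) (qstirling_poly q k)) y
      = poly ([:1, q - 1:] ^ n) y" for y
  proof -
    have factor: "(q - 1) * (y - (1 - q ^ i) / (1 - q)) = (1 + (q - 1) * y) - q ^ i" for i
      using assms by (simp add: field_simps)
    have "poly (\<Sum>k\<le>n. smult (complete_hom (\<lambda>i. q ^ i) k (n - k) * (q - 1) ^ k) (qstirling_poly q k)) y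
        = (\<Sum>k\<le>n. complete_hom (\<lambda>i. q ^ i) k (n - k) * (\<Prod>i<k. (1 + (q - 1) * y) - q ^ i))"
      by (simp add: poly_sum poly_qstirling_poly assms prod.distrib mult.assoc flip: factor)
    also have "\<dots> = (1 + (q - 1) * y) ^ n"
      by (rule power_eq_newton_sum[symmetric])
    also have "\<dots> = poly ([:1, q - 1:] ^ n) y"
      by (simp add: mult.commute)
    finally show ?thesis .
  qed
  then show ?thesis by (intro poly_eq_poly_eq_iff[THEN iffD1] ext)
qed

lemma stirling1q_eq_0: "k < l \<Longrightarrow> stirling1q q k l = 0"
  using degree_qstirling_poly[of q k] by (simp flip: coeff_qstirling_poly add: coeff_eq_0)

lemma sum_complete_hom_stirling1q:
  fixes q :: "'a::field_char_0"
  assumes "q \<noteq> 0" "q \<noteq> 1" "l \<le> n"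
  shows "(\<Sum>k=l..n. complete_hom (\<lambda>i. q ^ i) k (n - k) * (1 / (1 - q) ^ (n + l - k))
            * stirling1q q k l * (-1) ^ k)
       = of_nat (n choose l) * (-1) ^ l / (1 - q) ^ n"
proof -
  define h where "h k = complete_hom (\<lambda>i. q ^ i) k (n - k)" for k
  have summand: "h k * (1 / (1 - q) ^ (n + l - k)) * stirling1q q k l * (-1) ^ k
      = h k * (q - 1) ^ k * stirling1q q k l / (1 - q) ^ (n + l)" if "k \<le> n" for k
  proof -
    have "(q - 1) ^ k = (-1) ^ k * (1 - q) ^ k"
      by (simp flip: power_mult_distrib)
    with that assms(2) show ?thesis
      by (simp add: power_diff field_simps)
  qed
  have "(\<Sum>k=l..n. h k * (q - 1) ^ k * stirling1q q k l)
      = (\<Sum>k\<le>n. h k * (q - 1) ^ k * stirling1q q k l)"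
    by (rule sum.mono_neutral_left) (auto simp: stirling1q_eq_0)
  also have "\<dots> = of_nat (n choose l) * (q - 1) ^ l"
    using arg_cong[OF sum_qstirling_poly[OF assms(1,2)], of "\<lambda>p. coeff p l"] assms(3)
    by (simp add: h_def coeff_sum coeff_qstirling_poly coeff_linear_poly_power)
  finally have coeff_l: "(\<Sum>k=l..n. h k * (q - 1) ^ k * stirling1q q k l) = of_nat (n choose l) * (q - 1) ^ l" .
  have "(\<Sum>k=l..n. h k * (1 / (1 - q) ^ (n + l - k)) * stirling1q q k l * (-1) ^ k)
      = (\<Sum>k=l..n. h k * (q - 1) ^ k * stirling1q q k l) / (1 - q) ^ (n + l)"
    unfolding sum_divide_distrib by (intro sum.cong refl summand) simp
  also have "\<dots> = of_nat (n choose l) * (q - 1) ^ l / (1 - q) ^ (n + l)"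
    by (simp only: coeff_l)
  also have "\<dots> = of_nat (n choose l) * (-1) ^ l / (1 - q) ^ n"
    using assms(2) by (simp add: power_add power_minus' field_simps flip: power_mult_distrib)
  finally show ?thesis by (simp add: h_def)
qed

lemma sum_comps_stirling1q_binomial:
  fixes q :: "'a::field_char_0"
  assumes "q \<noteq> 0" "q \<noteq> 1"
  shows "(\<Sum>l\<le>n. \<Sum>k=l..n. \<Sum>ls\<in>comps k (n - k).
            q ^ (\<Sum>i\<le>k. i * ls i) * (1 / (1 - q) ^ (n + l - k)) * stirling1q q k l
            * (-1) ^ k * w l / (1 + q ^ l))
       = (\<Sum>l\<le>n. of_nat (n choose l) * (-1) ^ l / (1 - q) ^ n * w l / (1 + q ^ l))"
proof (rule sum.cong[OF refl])
  fix l assume "l \<in> {..n}"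
  then have "(\<Sum>k=l..n. complete_hom (\<lambda>i. q ^ i) k (n - k) * (1 / (1 - q) ^ (n + l - k))
      * stirling1q q k l * (-1) ^ k) * (w l / (1 + q ^ l))
      = of_nat (n choose l) * (-1) ^ l / (1 - q) ^ n * (w l / (1 + q ^ l))"
    using sum_complete_hom_stirling1q[OF assms] by simp
  then show "(\<Sum>k=l..n. \<Sum>ls\<in>comps k (n - k).
            q ^ (\<Sum>i\<le>k. i * ls i) * (1 / (1 - q) ^ (n + l - k)) * stirling1q q k l
            * (-1) ^ k * w l / (1 + q ^ l))
      = of_nat (n choose l) * (-1) ^ l / (1 - q) ^ n * w l / (1 + q ^ l)"
    unfolding complete_hom_geometric sum_distrib_right by simp
qed

section \<open>Non-archimedean and p-adic absolute values\<close>

locale nonarch_absv =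
  fixes absv :: "'a::field \<Rightarrow> real"
  assumes absv_nonneg: "absv x \<ge> 0"
    and absv_eq_0_iff: "absv x = 0 \<longleftrightarrow> x = 0"
    and absv_mult: "absv (x * y) = absv x * absv y"
    and absv_add_le_max: "absv (x + y) \<le> max (absv x) (absv y)"
begin

lemma absv_0 [simp]: "absv 0 = 0"
  by (simp add: absv_eq_0_iff)

lemma absv_1 [simp]: "absv 1 = 1"
  using absv_mult[of 1 1] absv_eq_0_iff[of 1] by simp

lemma absv_minus [simp]: "absv (- x) = absv x"
proof -
  have "absv (-1) * absv (-1) = 1"
    by (simp flip: absv_mult)
  then have "absv (-1) = 1"
    using absv_nonneg[of "-1"] by (metis abs_of_nonneg abs_square_eq_1 power2_eq_square)
  then show ?thesis
    using absv_mult[of "-1" x] by simp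
qed

lemma absv_minus_commute: "absv (x - y) = absv (y - x)"
  using absv_minus[of "x - y"] by simp

lemma absv_diff_le_max: "absv (x - z) \<le> max (absv (x - y)) (absv (y - z))"
  using absv_add_le_max[of "x - y" "y - z"] by simp

lemma absv_add_le: "absv (x + y) \<le> absv x + absv y"
  using absv_add_le_max[of x y] absv_nonneg[of x] absv_nonneg[of y] by linarith

lemma absv_add_eq_left:
  assumes "absv y < absv x"
  shows "absv (x + y) = absv x"
proof -
  have "absv x \<le> max (absv (x + y)) (absv (- y))"
    using absv_add_le_max[of "x + y" "- y"] by simp
  with assms have "absv x \<le> absv (x + y)"
    by simp
  moreover have "absv (x + y) \<le> absv x"
    using absv_add_le_max[of x y] assms by simp
  ultimately show ?thesis
    by simp
qed

lemma absv_power: "absv (x ^ n) = absv x ^ n"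
  by (induction n) (simp_all add: absv_mult)

lemma absv_inverse: "absv (inverse x) = inverse (absv x)"
  by (cases "x = 0") (simp_all add: absv_eq_0_iff field_simps flip: absv_mult)

lemma absv_divide: "absv (x / y) = absv x / absv y"
  by (simp add: divide_inverse absv_mult absv_inverse)

lemma absv_of_nat_le_1: "absv (of_nat n) \<le> 1"
proof (induction n)
  case (Suc n)
  then show ?case
    using absv_add_le_max[of 1 "of_nat n"] by simp
qed simp

lemma absv_of_int_le_1: "absv (of_int j) \<le> 1"
  by (cases j rule: int_cases) (simp_all add: absv_of_nat_le_1 flip: of_nat_Suc)

lemma absv_sum_le:
  assumes "\<And>i. i \<in> S \<Longrightarrow> absv (f i) \<le> M" "M \<ge> 0"
  shows "absv (sum f S) \<le> M"
  using assms
proof (induction S rule: infinite_finite_induct)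
  case (insert i S)
  then show ?case
    using absv_add_le_max[of "f i" "sum f S"] by fastforce
qed simp_all

lemma absv_sum_le_sum: "absv (sum f S) \<le> (\<Sum>i\<in>S. absv (f i))"
proof (induction S rule: infinite_finite_induct)
  case (insert i S)
  then show ?case
    using absv_add_le[of "f i" "sum f S"] by simp
qed simp_all

lemma absv_power_diff_le:
  assumes "absv a \<le> 1" "absv b \<le> 1"
  shows "absv (a ^ k - b ^ k) \<le> absv (a - b)"
proof -
  have "absv (\<Sum>i<k. b ^ (k - Suc i) * a ^ i) \<le> 1"
    using assms absv_nonneg
    by (intro absv_sum_le) (simp_all add: absv_mult absv_power mult_le_one power_le_one)
  then have "absv (a - b) * absv (\<Sum>i<k. b ^ (k - Suc i) * a ^ i) \<le> absv (a - b)"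
    using absv_nonneg by (simp add: mult_left_le)
  then show ?thesis
    by (simp add: power_diff_sumr2 absv_mult)
qed

end

text \<open>p^(-1/(p-1)) is the radius of convergence of the p-adic exponential.  For |s| below it,
  |s|^p \<le> |s|/p, so in (1 + s)^p - 1 the term s^p is as small as the terms whose binomial
  coefficients are divisible by p.\<close>

definition exp_radius :: "nat \<Rightarrow> real" where
  "exp_radius p = real p powr (- 1 / (real p - 1))"

lemma exp_radius_less_1: "p > 1 \<Longrightarrow> exp_radius p < 1"
  by (simp add: exp_radius_def powr_less_one)

lemma exp_radius_power:
  assumes "p > 1"
  shows "exp_radius p ^ (p - 1) = 1 / real p"
proof -
  have "exp_radius p ^ (p - 1) = real p powr (real (p - 1) * (- 1 / (real p - 1)))"
    using assms by (simp add: exp_radius_def powr_powr flip: powr_realpow)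
  also have "real (p - 1) * (- 1 / (real p - 1)) = -1"
    using assms by simp
  finally show ?thesis
    using assms by (simp add: powr_minus_divide)
qed

locale padic_absv = nonarch_absv absv for absv :: "'a::field_char_0 \<Rightarrow> real" +
  fixes p :: nat
  assumes prime_p: "prime p"
    and absv_of_nat_p: "absv (of_nat p) = 1 / real p"
begin

lemma p_gt_1: "p > 1"
  using prime_p prime_gt_1_nat by blast

lemma absv_of_int_eq_1:
  assumes "\<not> int p dvd j"
  shows "absv (of_int j) = 1"
proof -
  have "coprime (int p) j"
    using assms prime_p by (simp add: prime_imp_coprime)
  then obtain u v where uv: "u * int p + v * j = 1"
    by (metis bezout_int coprime_iff_gcd_eq_1)
  have "absv (of_int u * of_nat p) < 1"
    using absv_of_int_le_1[of u] p_gt_1 by (simp add: absv_mult absv_of_nat_p divide_le_eq_1)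
  moreover have "1 = absv (of_int u * of_nat p + of_int v * of_int j)"
    using arg_cong[OF uv, of "\<lambda>t. absv (of_int t)"] by simp
  moreover have "absv (of_int v * of_int j) \<le> absv (of_int j)"
    using mult_left_le_one_le[OF absv_nonneg absv_nonneg absv_of_int_le_1]
    by (simp add: absv_mult)
  ultimately have "1 \<le> absv (of_int j)"
    using absv_add_le_max[of "of_int u * of_nat p" "of_int v * of_int j"] by linarith
  then show ?thesis
    using absv_of_int_le_1[of j] by simp
qed

lemma p_power_dvd_if_absv_less:
  "absv (of_int j) < (1 / real p) ^ N \<Longrightarrow> int p ^ N dvd j"
proof (induction N arbitrary: j)
  case (Suc N)
  have "(1 / real p) ^ Suc N \<le> (1 / real p) ^ N"
    using p_gt_1 by (intro power_decreasing) auto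
  with Suc have "int p ^ N dvd j"
    by simp
  then obtain j' where j: "j = int p ^ N * j'"
    by (elim dvdE)
  then have "(1 / real p) ^ N * absv (of_int j') < (1 / real p) ^ N * (1 / real p)"
    using Suc.prems by (simp add: absv_mult absv_power absv_of_nat_p)
  then have "absv (of_int j') < 1 / real p"
    by (rule mult_left_less_imp_less) simp
  with p_gt_1 have "int p dvd j'"
    using absv_of_int_eq_1 by fastforce
  with j show ?case
    by simp
qed simp

lemma absv_choose_prime:
  assumes "0 < i" "i < p"
  shows "absv (of_nat (p choose i)) \<le> 1 / real p"
proof -
  have "p dvd (p choose i)"
    using dvd_choose_prime[of i p] assms prime_p by simp
  then obtain m where "p choose i = p * m"
    by (elim dvdE)
  then show ?thesis
    using absv_of_nat_le_1[of m] by (simp add: absv_mult absv_of_nat_p divide_right_mono)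
qed

lemma absv_power_p_sub_1_le:
  assumes "absv (r - 1) < exp_radius p"
  shows "absv (r ^ p - 1) \<le> absv (r - 1) / real p"
proof -
  define s where "s = r - 1"
  have absv_s_le_1: "absv s \<le> 1"
    using assms exp_radius_less_1[OF p_gt_1] by (simp add: s_def)
  have "absv s ^ (p - 1) \<le> exp_radius p ^ (p - 1)"
    using assms absv_nonneg by (intro power_mono) (simp_all add: s_def)
  then have absv_s_power: "absv s ^ (p - 1) \<le> 1 / real p"
    using exp_radius_power[OF p_gt_1] by simp
  have "r ^ p = (\<Sum>i\<le>p. of_nat (p choose i) * s ^ i)"
    using binomial_ring[of s 1 p] by (simp add: s_def)
  also have "\<dots> = 1 + (\<Sum>i=1..p. of_nat (p choose i) * s ^ i)"
    by (simp add: atMost_atLeast0 sum.atLeast_Suc_atMost)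
  finally have "r ^ p - 1 = (\<Sum>i=1..p. of_nat (p choose i) * s ^ i)"
    by simp
  moreover have "absv (of_nat (p choose i) * s ^ i) \<le> absv s / real p" if i_range: "i \<in> {1..p}" for i
  proof -
    obtain j where i: "i = Suc j"
      using i_range by (cases i) auto
    show ?thesis
    proof (cases "i = p")
      case True
      from True i have "s ^ i = s * s ^ (p - 1)"
        by (metis diff_Suc_1 power_Suc)
      with True have "absv (of_nat (p choose i) * s ^ i) = absv s * absv s ^ (p - 1)"
        by (simp add: absv_mult absv_power)
      also have "\<dots> \<le> absv s * (1 / real p)"
        using absv_s_power absv_nonneg by (intro mult_left_mono) simp_all
      finally show ?thesis
        by simp
    next
      case False
      with i_range have "absv (of_nat (p choose i)) \<le> 1 / real p"
        by (intro absv_choose_prime) auto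
      moreover have "absv (s ^ i) \<le> absv s"
        using absv_s_le_1 absv_nonneg[of s]
        by (simp add: i absv_mult absv_power power_le_one mult_left_le)
      ultimately have "absv (of_nat (p choose i)) * absv (s ^ i) \<le> 1 / real p * absv s"
        by (rule mult_mono) (simp_all add: absv_nonneg)
      then show ?thesis
        by (simp add: absv_mult)
    qed
  qed
  ultimately show ?thesis
    using absv_sum_le[of "{1..p}" "\<lambda>i. of_nat (p choose i) * s ^ i" "absv s / real p"] absv_nonneg
    by (simp add: s_def)
qed

lemma absv_power_p_power_sub_1_le:
  assumes "absv (r - 1) < exp_radius p"
  shows "absv (r ^ p ^ N - 1) \<le> absv (r - 1) / real p ^ N"
proof (induction N)
  case (Suc N)
  have "absv (r - 1) / real p ^ N \<le> absv (r - 1)"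
    using p_gt_1 absv_nonneg[of "r - 1"] divide_left_mono[of 1 "real p ^ N" "absv (r - 1)"]
    by simp
  with Suc assms have "absv (r ^ p ^ N - 1) < exp_radius p"
    by linarith
  then have "absv ((r ^ p ^ N) ^ p - 1) \<le> absv (r ^ p ^ N - 1) / real p"
    by (rule absv_power_p_sub_1_le)
  also have "\<dots> \<le> absv (r - 1) / real p ^ N / real p"
    using Suc.IH by (intro divide_right_mono) simp_all
  finally show ?case
    by (simp add: mult.commute flip: power_mult)
qed simp

lemma absv_1_add_eq_1:
  assumes "odd p" "absv (r - 1) < 1"
  shows "absv (1 + r) = 1"
proof -
  have "\<not> p dvd 2"
  proof
    assume "p dvd 2"
    then have "p = 2"
      using p_gt_1 dvd_imp_le[of p 2] by simp
    with assms(1) show False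
      by simp
  qed
  then have "absv (of_int (int 2)) = 1"
    by (intro absv_of_int_eq_1) (simp only: int_dvd_int_iff not_False_eq_True)
  then have "absv 2 = 1"
    by simp
  with assms(2) have "absv (2 + (r - 1)) = absv 2"
    by (intro absv_add_eq_left) simp
  moreover have "2 + (r - 1) = 1 + r"
    by simp
  ultimately show ?thesis
    using \<open>absv 2 = 1\<close> by simp
qed

end

lemma padic_absv_if_is_Cp: "prime p \<Longrightarrow> is_Cp p absv \<Longrightarrow> padic_absv absv p"
  by unfold_locales (auto simp: is_Cp_def)

section \<open>The fermionic integral of geometric sequences\<close>

lemma abs_tends_zero_if_le_div_power:
  assumes "\<And>N. u N \<le> C / b ^ N" "b > 1"
  shows "abs_tends_zero u"
  unfolding abs_tends_zero_def
proof (intro allI impI)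
  fix e :: real assume "e > 0"
  have "(\<lambda>N. C * inverse (b ^ N)) \<longlonglongrightarrow> 0"
    by (intro tendsto_mult_right_zero LIMSEQ_inverse_realpow_zero assms)
  with \<open>e > 0\<close> obtain M where "\<And>N. N \<ge> M \<Longrightarrow> C * inverse (b ^ N) < e"
    by (metis order_tendstoD(2) eventually_sequentially)
  with assms(1) show "\<exists>M. \<forall>N\<ge>M. u N < e"
    by (metis divide_inverse le_less_trans)
qed

lemma alternating_geometric_sum:
  fixes r :: "'a::field"
  assumes "odd M" "1 + r \<noteq> 0"
  shows "(\<Sum>y<M. r ^ y * (-1) ^ y) = (1 + r ^ M) / (1 + r)"
proof -
  have "- r \<noteq> 1"
    using assms(2) by (metis add.inverse_inverse add.right_inverse)
  then have "(\<Sum>y<M. (- r) ^ y) = (1 - (- r) ^ M) / (1 - - r)"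
    by (simp add: sum_gp_strict)
  with assms(1) show ?thesis
    by (simp add: power_minus' mult.commute)
qed

context padic_absv
begin

lemma fermionic_has_geometric_sum:
  assumes "odd p" "finite S"
    and r: "\<And>l. l \<in> S \<Longrightarrow> absv (r l - 1) < exp_radius p"
    and f: "\<And>y. f (of_nat y) = (\<Sum>l\<in>S. a l * r l ^ y)"
  shows "fermionic_has p absv f (\<Sum>l\<in>S. 2 * a l / (1 + r l))"
proof -
  have one_add_r: "absv (1 + r l) = 1" if "l \<in> S" for l
    using r[OF that] exp_radius_less_1[OF p_gt_1] absv_1_add_eq_1[OF assms(1)] by simp
  then have one_add_r_nonzero: "1 + r l \<noteq> 0" if "l \<in> S" for l
    using that absv_eq_0_iff by force
  define C where "C = (\<Sum>l\<in>S. absv (a l) * absv (r l - 1))"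
  have "absv ((\<Sum>y<p ^ N. f (of_nat y) * (-1) ^ y) - (\<Sum>l\<in>S. 2 * a l / (1 + r l)))
      \<le> C / real p ^ N" for N
  proof -
    have odd_power: "odd (p ^ N)"
      using assms(1) by simp
    have "(\<Sum>y<p ^ N. f (of_nat y) * (-1) ^ y) = (\<Sum>l\<in>S. a l * (\<Sum>y<p ^ N. r l ^ y * (-1) ^ y))"
      by (simp add: f sum_distrib_left sum_distrib_right mult.assoc sum.swap[of _ S])
    also have "\<dots> = (\<Sum>l\<in>S. a l * ((1 + r l ^ p ^ N) / (1 + r l)))"
      using alternating_geometric_sum[OF odd_power one_add_r_nonzero] by simp
    also have "\<dots> - (\<Sum>l\<in>S. 2 * a l / (1 + r l)) = (\<Sum>l\<in>S. a l * (r l ^ p ^ N - 1) / (1 + r l))"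
      unfolding sum_subtractf[symmetric]
      by (intro sum.cong refl) (simp add: diff_divide_distrib add_divide_distrib algebra_simps)
    finally have "(\<Sum>y<p ^ N. f (of_nat y) * (-1) ^ y) - (\<Sum>l\<in>S. 2 * a l / (1 + r l))
        = (\<Sum>l\<in>S. a l * (r l ^ p ^ N - 1) / (1 + r l))" .
    also have "absv \<dots> \<le> (\<Sum>l\<in>S. absv (a l * (r l ^ p ^ N - 1) / (1 + r l)))"
      by (rule absv_sum_le_sum)
    also have "\<dots> = (\<Sum>l\<in>S. absv (a l) * absv (r l ^ p ^ N - 1))"
      by (intro sum.cong refl) (simp add: absv_divide absv_mult one_add_r)
    also have "\<dots> \<le> (\<Sum>l\<in>S. absv (a l) * (absv (r l - 1) / real p ^ N))"
      using absv_power_p_power_sub_1_le[OF r] absv_nonneg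
      by (intro sum_mono mult_left_mono) simp_all
    also have "\<dots> = C / real p ^ N"
      by (simp add: C_def sum_divide_distrib)
    finally show ?thesis .
  qed
  then show ?thesis
    unfolding fermionic_has_def using p_gt_1
    by (intro abs_tends_zero_if_le_div_power[where b = "real p"]) simp_all
qed

end

section \<open>The function q^x\<close>

context padic_absv
begin

lemma of_int_in_Zp: "of_int n \<in> Zp absv"
  unfolding Zp_def by (auto intro!: exI[of _ n])

lemma Zp_add_closed:
  assumes "x \<in> Zp absv" "z \<in> Zp absv"
  shows "x + z \<in> Zp absv"
  unfolding Zp_def
proof (intro CollectI allI impI)
  fix e :: real assume "e > 0"
  with assms obtain m n :: int where "absv (x - of_int m) < e" "absv (z - of_int n) < e"
    unfolding Zp_def by blast
  then have "absv (x + z - of_int (m + n)) < e"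
    using absv_add_le_max[of "x - of_int m" "z - of_int n"] by (simp add: algebra_simps)
  then show "\<exists>n::int. absv (x + z - of_int n) < e" ..
qed

lemma of_nat_mult_in_Zp: "x \<in> Zp absv \<Longrightarrow> of_nat l * x \<in> Zp absv"
  using of_int_in_Zp[of 0] by (induction l) (simp_all add: algebra_simps Zp_add_closed)

end

locale q_near_one = padic_absv absv p for absv :: "'a::field_char_0 \<Rightarrow> real" and p +
  fixes q :: 'a
  assumes absv_1_sub_q: "absv (1 - q) < exp_radius p"
begin

lemma absv_q_sub_1: "absv (q - 1) < exp_radius p"
  using absv_1_sub_q absv_minus_commute by simp

lemma absv_q: "absv q = 1"
proof -
  have "absv (q - 1) < absv 1"
    using absv_q_sub_1 exp_radius_less_1[OF p_gt_1] by simp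
  then show ?thesis
    using absv_add_eq_left[of "q - 1" 1] by simp
qed

lemma q_nonzero: "q \<noteq> 0"
  using absv_q by auto

lemma absv_q_power_int: "absv (q powi n) = 1"
  by (cases n rule: int_cases2) (simp_all add: power_int_minus absv_inverse absv_power absv_q)

lemma absv_q_power_int_diff_le:
  assumes "absv (of_int n - of_int m) < (1 / real p) ^ N"
  shows "absv (q powi n - q powi m) \<le> absv (q - 1) / real p ^ N"
  using assms
proof (induction n m rule: linorder_wlog)
  case (sym n m)
  then show ?case
    using absv_minus_commute by metis
next
  case (le m n)
  then have "int p ^ N dvd n - m"
    by (intro p_power_dvd_if_absv_less) (simp add: absv_minus_commute)
  then obtain k where k: "n - m = int p ^ N * k"
    by (elim dvdE)
  moreover have "int p ^ N > 0"
    using p_gt_1 by simp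
  ultimately have "k \<ge> 0"
    using le by (metis diff_ge_0_iff_ge zero_le_mult_iff not_less)
  with k obtain k' where k': "n - m = int (p ^ N * k')"
    by (metis nonneg_int_cases of_nat_mult of_nat_power)
  have "q powi n = q powi m * q powi (n - m)"
    using q_nonzero by (simp flip: power_int_add)
  also have "q powi (n - m) = (q ^ p ^ N) ^ k'"
    by (simp only: k' power_int_of_nat power_mult)
  finally have "q powi n = q powi m * (q ^ p ^ N) ^ k'" .
  then have "absv (q powi n - q powi m) = absv ((q ^ p ^ N) ^ k' - 1 ^ k')"
    using absv_mult[of "q powi m" "(q ^ p ^ N) ^ k' - 1"]
    by (simp add: right_diff_distrib absv_q_power_int)
  also have "\<dots> \<le> absv (q ^ p ^ N - 1)"
    by (intro absv_power_diff_le) (simp_all add: absv_power absv_q)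
  also have "\<dots> \<le> absv (q - 1) / real p ^ N"
    by (rule absv_power_p_power_sub_1_le[OF absv_q_sub_1])
  finally show ?case
    by (simp add: absv_minus_commute)
qed

lemma uniformly_continuous_q_power_int:
  assumes "e > 0"
  obtains d where "d > 0" "\<And>n m. absv (of_int n - of_int m) < d \<Longrightarrow> absv (q powi n - q powi m) < e"
proof -
  obtain N where "absv (q - 1) / e < real p ^ N"
    using real_arch_pow[of "real p"] p_gt_1 by auto
  with assms have small: "absv (q - 1) / real p ^ N < e"
    using p_gt_1 by (simp add: divide_less_eq mult.commute)
  show ?thesis
  proof (rule that)
    show "(1 / real p) ^ N > 0"
      using p_gt_1 by simp
    show "absv (q powi n - q powi m) < e" if "absv (of_int n - of_int m) < (1 / real p) ^ N" for n m
      using absv_q_power_int_diff_le[OF that] small by linarith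
  qed
qed

lemma qpow_hasI:
  assumes "\<And>e d. e > 0 \<Longrightarrow> d > 0 \<Longrightarrow> \<exists>n. absv (x - of_int n) < d \<and> absv (q powi n - v) < e"
  shows "qpow_has absv q x v"
  unfolding qpow_has_def
proof (intro allI impI)
  fix e :: real assume "e > 0"
  then obtain d where d: "d > 0" "\<And>n m. absv (of_int n - of_int m) < d \<Longrightarrow> absv (q powi n - q powi m) < e"
    using uniformly_continuous_q_power_int by blast
  obtain m where m: "absv (x - of_int m) < d" "absv (q powi m - v) < e"
    using assms[OF \<open>e > 0\<close> \<open>d > 0\<close>] by blast
  have "absv (q powi n - v) < e" if n: "absv (x - of_int n) < d" for n
  proof -
    have "absv (of_int n - of_int m) \<le> max (absv (of_int n - x)) (absv (x - of_int m))"
      by (rule absv_diff_le_max)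
    then have "absv (q powi n - q powi m) < e"
      using n m(1) by (intro d(2)) (simp add: absv_minus_commute[of "of_int n"])
    then show ?thesis
      using m(2) absv_diff_le_max[of "q powi n" v "q powi m"] by linarith
  qed
  with d(1) show "\<exists>d>0. \<forall>n. absv (x - of_int n) < d \<longrightarrow> absv (q powi n - v) < e"
    by blast
qed

lemma qpow_has_unique:
  assumes "x \<in> Zp absv" "qpow_has absv q x v" "qpow_has absv q x w"
  shows "v = w"
proof (rule ccontr)
  assume "v \<noteq> w"
  then have e: "absv (v - w) > 0"
    using absv_nonneg[of "v - w"] absv_eq_0_iff[of "v - w"] by simp
  obtain d1 where d1: "d1 > 0" "\<And>n. absv (x - of_int n) < d1 \<Longrightarrow> absv (q powi n - v) < absv (v - w)"
    using assms(2) e unfolding qpow_has_def by blast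
  obtain d2 where d2: "d2 > 0" "\<And>n. absv (x - of_int n) < d2 \<Longrightarrow> absv (q powi n - w) < absv (v - w)"
    using assms(3) e unfolding qpow_has_def by blast
  have "min d1 d2 > 0"
    using d1(1) d2(1) by simp
  then obtain n where "absv (x - of_int n) < min d1 d2"
    using assms(1) unfolding Zp_def by blast
  then have "absv (v - q powi n) < absv (v - w)" "absv (q powi n - w) < absv (v - w)"
    using d1(2) d2(2) absv_minus_commute[of v] by simp_all
  then show False
    using absv_diff_le_max[of v w "q powi n"] by linarith
qed

lemma qpow_eqI: "x \<in> Zp absv \<Longrightarrow> qpow_has absv q x v \<Longrightarrow> qpow absv q x = v"
  unfolding qpow_def using qpow_has_unique by blast

lemma qpow_has_exists:
  assumes complete: "\<And>X. \<forall>e>0. \<exists>M. \<forall>m\<ge>M. \<forall>n\<ge>M. absv (X m - X n) < e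
      \<Longrightarrow> \<exists>L. abs_tends_zero (\<lambda>n. absv (X n - L))"
    and "x \<in> Zp absv"
  obtains v where "qpow_has absv q x v"
proof -
  have "\<forall>k. \<exists>n::int. absv (x - of_int n) < inverse (real (Suc k))"
    using \<open>x \<in> Zp absv\<close> unfolding Zp_def by simp
  then obtain n :: "nat \<Rightarrow> int" where n: "\<And>k. absv (x - of_int (n k)) < inverse (real (Suc k))"
    by metis
  have close: "\<exists>M. \<forall>k\<ge>M. absv (x - of_int (n k)) < d" if d: "d > 0" for d
  proof -
    obtain M where M: "inverse (real (Suc M)) < d"
      using reals_Archimedean[OF d] by blast
    have "absv (x - of_int (n k)) < d" if "k \<ge> M" for k
    proof -
      have "inverse (real (Suc k)) \<le> inverse (real (Suc M))"
        using that by (simp add: le_imp_inverse_le)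
      then show ?thesis
        using n[of k] M by linarith
    qed
    then show ?thesis by blast
  qed
  have "\<forall>e>0. \<exists>M. \<forall>a\<ge>M. \<forall>b\<ge>M. absv (q powi n a - q powi n b) < e"
  proof (intro allI impI)
    fix e :: real assume "e > 0"
    then obtain d where d: "d > 0" "\<And>n m. absv (of_int n - of_int m) < d \<Longrightarrow> absv (q powi n - q powi m) < e"
      using uniformly_continuous_q_power_int by blast
    obtain M where M: "\<And>k. k \<ge> M \<Longrightarrow> absv (x - of_int (n k)) < d"
      using close[OF d(1)] by blast
    have "absv (q powi n a - q powi n b) < e" if "a \<ge> M" "b \<ge> M" for a b
    proof (rule d(2))
      have "absv (of_int (n a) - of_int (n b)) \<le> max (absv (of_int (n a) - x)) (absv (x - of_int (n b)))"
        by (rule absv_diff_le_max)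
      then show "absv (of_int (n a) - of_int (n b)) < d"
        using M[OF that(1)] M[OF that(2)] by (simp add: absv_minus_commute[of "of_int (n a)"])
    qed
    then show "\<exists>M. \<forall>a\<ge>M. \<forall>b\<ge>M. absv (q powi n a - q powi n b) < e"
      by blast
  qed
  then obtain v where v: "abs_tends_zero (\<lambda>k. absv (q powi n k - v))"
    using complete[of "\<lambda>k. q powi n k"] by blast
  have "qpow_has absv q x v"
  proof (rule qpow_hasI)
    fix e d :: real assume "e > 0" "d > 0"
    obtain M1 where M1: "\<And>k. k \<ge> M1 \<Longrightarrow> absv (q powi n k - v) < e"
      using v \<open>e > 0\<close> unfolding abs_tends_zero_def by blast
    obtain M2 where M2: "\<And>k. k \<ge> M2 \<Longrightarrow> absv (x - of_int (n k)) < d"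
      using close[OF \<open>d > 0\<close>] by blast
    show "\<exists>n. absv (x - of_int n) < d \<and> absv (q powi n - v) < e"
      using M1[of "max M1 M2"] M2[of "max M1 M2"] by auto
  qed
  then show ?thesis ..
qed

lemma qpow_has_absv_le_1:
  assumes "x \<in> Zp absv" "qpow_has absv q x v"
  shows "absv v \<le> 1"
proof -
  obtain d where d: "d > 0" "\<And>n. absv (x - of_int n) < d \<Longrightarrow> absv (q powi n - v) < 1"
    using assms(2) unfolding qpow_has_def by (meson zero_less_one)
  then obtain n where "absv (x - of_int n) < d"
    using assms(1) unfolding Zp_def by blast
  then have "absv (v - q powi n) < 1"
    using d(2) absv_minus_commute[of v] by simp
  then show ?thesis
    using absv_add_le_max[of "q powi n" "v - q powi n"] absv_q_power_int[of n] by simp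
qed

lemma qpow_has_of_int: "qpow_has absv q (of_int n) (q powi n)"
  by (rule qpow_hasI) (auto intro!: exI[of _ n])

lemma qpow_has_add:
  assumes x: "x \<in> Zp absv" "qpow_has absv q x v"
    and z: "z \<in> Zp absv" "qpow_has absv q z w"
  shows "qpow_has absv q (x + z) (v * w)"
proof (rule qpow_hasI)
  fix e d :: real assume "e > 0" "d > 0"
  obtain d1 where d1: "d1 > 0" "\<And>n. absv (x - of_int n) < d1 \<Longrightarrow> absv (q powi n - v) < e"
    using x(2) \<open>e > 0\<close> unfolding qpow_has_def by blast
  obtain d2 where d2: "d2 > 0" "\<And>n. absv (z - of_int n) < d2 \<Longrightarrow> absv (q powi n - w) < e"
    using z(2) \<open>e > 0\<close> unfolding qpow_has_def by blast
  have "min d d1 > 0" "min d d2 > 0"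
    using d1(1) d2(1) \<open>d > 0\<close> by simp_all
  then obtain m n where m: "absv (x - of_int m) < min d d1" and n: "absv (z - of_int n) < min d d2"
    using x(1) z(1) unfolding Zp_def by blast
  have "absv (x + z - of_int (m + n)) \<le> max (absv (x - of_int m)) (absv (z - of_int n))"
    using absv_add_le_max[of "x - of_int m" "z - of_int n"] by (simp add: algebra_simps)
  also have "\<dots> < d"
    using m n by simp
  finally have "absv (x + z - of_int (m + n)) < d" .
  moreover have "absv (q powi (m + n) - v * w) < e"
  proof -
    have "q powi (m + n) - v * w = (q powi m - v) * q powi n + v * (q powi n - w)"
      using q_nonzero by (simp add: power_int_add algebra_simps)
    moreover have "absv ((q powi m - v) * q powi n) < e"
      using d1(2) m by (simp add: absv_mult absv_q_power_int)
    moreover have "absv v * absv (q powi n - w) \<le> absv (q powi n - w)"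
      using qpow_has_absv_le_1[OF x] absv_nonneg by (intro mult_left_le_one_le)
    then have "absv (v * (q powi n - w)) < e"
      using d2(2)[of n] n by (simp add: absv_mult)
    ultimately show ?thesis
      using absv_add_le_max[of "(q powi m - v) * q powi n" "v * (q powi n - w)"] by simp
  qed
  ultimately show "\<exists>k. absv (x + z - of_int k) < d \<and> absv (q powi k - v * w) < e"
    by blast
qed

lemma qpow_has_of_nat_mult:
  assumes "x \<in> Zp absv" "qpow_has absv q x v"
  shows "qpow_has absv q (of_nat l * x) (v ^ l)"
proof (induction l)
  case 0
  show ?case
    using qpow_has_of_int[of 0] by simp
next
  case (Suc l)
  then show ?case
    using qpow_has_add[OF assms of_nat_mult_in_Zp[OF assms(1)] Suc] by (simp add: algebra_simps)
qed

lemma absv_q_power_sub_1: "absv (q ^ l - 1) < exp_radius p"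
  using absv_power_diff_le[of q 1 l] absv_q absv_q_sub_1 by simp

lemma qnum_power_eq_geometric_sum:
  assumes "x \<in> Zp absv" "qpow_has absv q x Q"
  shows "qnum absv q (x + of_nat y) ^ n
    = (\<Sum>l\<le>n. of_nat (n choose l) * (-1) ^ l / (1 - q) ^ n * Q ^ l * (q ^ l) ^ y)"
proof -
  have "qnum absv q (x + of_nat y) = (1 - Q * q ^ y) / (1 - q)"
    using qpow_eqI[OF Zp_add_closed[OF assms(1) of_int_in_Zp]
        qpow_has_add[OF assms of_int_in_Zp qpow_has_of_int, of "int y"]]
    by (simp add: qnum_def)
  then show ?thesis
    by (simp add: binomial_ring[of "- (Q * q ^ y)" 1, simplified] power_divide
          sum_divide_distrib power_minus' power_mult_distrib algebra_simps flip: power_mult)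
qed

end

theorem mainTheorem5:
  fixes p :: nat and absv :: "'a::field_char_0 \<Rightarrow> real" and q x :: 'a and n :: nat
  assumes "prime p" and "odd p"
    and "is_Cp p absv"
    and "q \<noteq> 1"
    and "absv (1 - q) < real p powr (- 1 / (real p - 1))"
    and "x \<in> Zp absv"
  shows "fermionic_has p absv (\<lambda>y. qnum absv q (x + y) ^ n)
           (2 * (\<Sum>l\<le>n. \<Sum>k=l..n. \<Sum>ls\<in>comps k (n - k).
              q ^ (\<Sum>i\<le>k. i * ls i) * (1 / (1 - q) ^ (n + l - k)) * stirling1q q k l
              * (-1) ^ k * qpow absv q (of_nat l * x) / (1 + q ^ l)))"
proof -
  interpret q_near_one absv p q
    using padic_absv_if_is_Cp[OF assms(1,3)] assms(5)
    by (simp add: q_near_one_def q_near_one_axioms_def exp_radius_def)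
  obtain Q where Q: "qpow_has absv q x Q"
    using qpow_has_exists assms(3,6) unfolding is_Cp_def by blast
  define c where "c l = of_nat (n choose l) * (-1) ^ l / (1 - q) ^ n" for l
  have "fermionic_has p absv (\<lambda>y. qnum absv q (x + y) ^ n) (\<Sum>l\<le>n. 2 * (c l * Q ^ l) / (1 + q ^ l))"
    using qnum_power_eq_geometric_sum[OF assms(6) Q] absv_q_power_sub_1
    by (intro fermionic_has_geometric_sum assms(2)) (simp_all add: c_def)
  moreover have "qpow absv q (of_nat l * x) = Q ^ l" for l
    using assms(6) Q by (intro qpow_eqI of_nat_mult_in_Zp qpow_has_of_nat_mult)
  ultimately show ?thesis
    unfolding sum_comps_stirling1q_binomial[OF q_nonzero assms(4)]
    by (simp add: c_def sum_distrib_left)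
qed

end
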